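(* Let $\Omega\subset\mathbb{P}(\mathbb{R}^d)$ be a properly convex domain, $\mathcal{C}\subset\Omega$ a non-empty closed convex subset, and $a_1,\dots,a_m\in\mathrm{Aut}(\Omega)$ with $a_j\mathcal{C}=\mathcal{C}$. For $r>0$ let $M_r:=\{x\in\mathcal{C}:H_\Omega(x,a_jx)\le r\text{ for all }1\le j\le m\}$. Then for every $r>0$, $$\mathrm{ConvHull}_\Omega(M_r)\subset M_{2^{d-1}r}.$$
   Context: Properly convex domain: open subset of $\mathbb{P}(\mathbb{R}^d)$ which is a bounded convex set in some affine chart. $H_\Omega$ is the Hilbert metric: $H_\Omega(x,y)=\frac12\log\frac{|x-b||y-a|}{|x-a||y-b|}$ with $a,b$ the boundary points on the line through $x\neq y$ ordered $a,x,y,b$. $\mathrm{ConvHull}_\Omega(X)$ is the smallest convex subset of $\overline{\Omega}$ containing $X$. *)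

theory Defs
  imports "HOL-Analysis.Analysis"
begin

text \<open>Projective space P(R^d) is modelled through R^d = the euclidean space 'a (d = DIM('a)).
A subset of P(R^d) contained in the complement of a hyperplane is represented by a cone
K of nonzero vectors (closed under positive scalings) whose set of rays is the subset.\<close>

definition is_cone :: "'a::euclidean_space set \<Rightarrow> bool" where
  "is_cone K \<longleftrightarrow> 0 \<notin> K \<and> (\<forall>v\<in>K. \<forall>t>0. t *\<^sub>R v \<in> K)"

definition chart_image :: "'a::euclidean_space \<Rightarrow> 'a set \<Rightarrow> 'a set" where
  "chart_image w K = (\<lambda>v. (1 / (w \<bullet> v)) *\<^sub>R v) ` K"

definition bounded_chart :: "'a::euclidean_space \<Rightarrow> 'a set \<Rightarrow> bool" where
  "bounded_chart w K \<longleftrightarrow> (\<forall>v\<in>K. w \<bullet> v > 0) \<and> bounded (chart_image w K)"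

definition properly_convex_domain :: "'a::euclidean_space set \<Rightarrow> bool" where
  "properly_convex_domain K \<longleftrightarrow> is_cone K \<and> open K \<and> K \<noteq> {} \<and>
     (\<exists>w. bounded_chart w K \<and> convex (chart_image w K))"

text \<open>Hilbert metric, computed in an affine chart in which the domain is bounded:
a, b are the boundary points on the line through x, y, ordered a, x, y, b.\<close>
definition hilbert_chart :: "'a::euclidean_space \<Rightarrow> 'a set \<Rightarrow> 'a \<Rightarrow> 'a \<Rightarrow> real" where
  "hilbert_chart w K x y =
    (let x' = (1 / (w \<bullet> x)) *\<^sub>R x; y' = (1 / (w \<bullet> y)) *\<^sub>R y; O' = chart_image w K;
         sa = Sup {s. s \<ge> 0 \<and> x' + s *\<^sub>R (x' - y') \<in> O'};
         sb = Sup {s. s \<ge> 0 \<and> y' + s *\<^sub>R (y' - x') \<in> O'};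
         a = x' + sa *\<^sub>R (x' - y'); b = y' + sb *\<^sub>R (y' - x')
     in if x' = y' then 0
        else ln ((norm (x' - b) * norm (y' - a)) / (norm (x' - a) * norm (y' - b))) / 2)"

definition hilbert_dist :: "'a::euclidean_space set \<Rightarrow> 'a \<Rightarrow> 'a \<Rightarrow> real" where
  "hilbert_dist K x y = hilbert_chart (SOME w. bounded_chart w K \<and> convex (chart_image w K)) K x y"

text \<open>Projective automorphisms of the domain, represented by linear maps preserving the cone.\<close>
definition proj_aut :: "'a::euclidean_space set \<Rightarrow> ('a \<Rightarrow> 'a) \<Rightarrow> bool" where
  "proj_aut K g \<longleftrightarrow> linear g \<and> bij g \<and> g ` K = K"

end

theory Submission
  imports Defs
begin

text \<open>Work in the open cone K over the domain and write p \<le> q when q - p lies in the closure of K.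
The Hilbert distance is Birkhoff's: 2 H(x, y) = ln (A B) for the least constants A, B with
x \<le> A y and y \<le> B x. For a linear map g preserving K these constants interact across points:
if g x \<le> \<beta> x and y \<le> \<gamma> g y then \<beta> \<gamma> \<ge> 1. If z is a convex combination of points x with
constants (\<alpha> x, \<beta> x) for the pair (x, g x), then z \<le> (max \<alpha>) g z and g z \<le> (max \<beta>) z, and the
cross inequality bounds (max \<alpha>) (max \<beta>) by a product of two of the \<alpha> x \<beta> x. Hence
H(z, g z) \<le> 2 r, which is at most 2^(d-1) r for d \<ge> 2, while in dimension 1 all Hilbert
distances vanish.\<close>

definition cone_le :: "'a::real_normed_vector set \<Rightarrow> 'a \<Rightarrow> 'a \<Rightarrow> bool" where
  "cone_le K p q \<longleftrightarrow> q - p \<in> closure K"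

locale open_convex_cone =
  fixes K :: "'a::euclidean_space set"
  assumes is_cone: "is_cone K" and open_cone: "open K" and convex_set: "convex K"
    and nonempty: "K \<noteq> {}"
begin

lemma scaleR_mem: "v \<in> K \<Longrightarrow> t > 0 \<Longrightarrow> t *\<^sub>R v \<in> K"
  using is_cone unfolding is_cone_def by auto

lemma add_mem: "u \<in> K \<Longrightarrow> v \<in> K \<Longrightarrow> u + v \<in> K"
proof -
  assume "u \<in> K" "v \<in> K"
  then have "(1/2) *\<^sub>R u + (1/2) *\<^sub>R v \<in> K" by (intro convexD[OF convex_set]) auto
  from scaleR_mem[OF this, of 2] show ?thesis by (simp add: scaleR_add_right)
qed

lemma zero_in_closure: "0 \<in> closure K"
  unfolding closure_approachable
proof (intro allI impI)
  fix e :: real assume e: "e > 0"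
  obtain u where u: "u \<in> K" using nonempty by auto
  have "norm u > 0" using u is_cone unfolding is_cone_def by auto
  then have "(e / (2 * norm u)) *\<^sub>R u \<in> K" "dist ((e / (2 * norm u)) *\<^sub>R u) 0 < e"
    using scaleR_mem[OF u] e by auto
  then show "\<exists>y\<in>K. dist y 0 < e" by blast
qed

lemma convex_cone_closure: "convex_cone (closure K)"
  unfolding convex_cone_def conic_def
proof (intro conjI allI impI)
  show "closure K \<noteq> {}" using zero_in_closure by auto
  show "convex (closure K)" using convex_set by (rule convex_closure)
  fix p :: 'a and c :: real assume p: "p \<in> closure K" and c: "0 \<le> c"
  show "c *\<^sub>R p \<in> closure K"
  proof (cases "c = 0")
    case False
    have "c *\<^sub>R p \<in> closure ((*\<^sub>R) c ` K)" using p closure_scaleR by blast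
    also have "\<dots> \<subseteq> closure K" using False c scaleR_mem by (intro closure_mono) auto
    finally show ?thesis .
  qed (simp add: zero_in_closure)
qed

lemma add_closure_mem: "u \<in> K \<Longrightarrow> p \<in> closure K \<Longrightarrow> u + p \<in> K"
proof -
  assume u: "u \<in> K" and p: "p \<in> closure K"
  obtain e where e: "e > 0" "ball u e \<subseteq> K" using open_cone u open_contains_ball by blast
  obtain q where q: "q \<in> K" "dist q p < e" using p e unfolding closure_approachable by blast
  have "u + (p - q) \<in> K" using q e by (auto simp: dist_norm norm_minus_commute)
  from add_mem[OF this q(1)] show ?thesis by simp
qed

lemma sum_mem_closure:
  "finite S \<Longrightarrow> (\<And>i. i \<in> S \<Longrightarrow> f i \<in> closure K) \<Longrightarrow> sum f S \<in> closure K"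
  by (induction S rule: finite_induct)
    (auto intro: convex_cone_add[OF convex_cone_closure] convex_cone_contains_0[OF convex_cone_closure])

lemma cone_le_refl: "cone_le K p p"
  by (simp add: cone_le_def zero_in_closure)

lemma cone_le_trans [trans]: "cone_le K p q \<Longrightarrow> cone_le K q r \<Longrightarrow> cone_le K p r"
  unfolding cone_le_def using convex_cone_add[OF convex_cone_closure] by fastforce

lemma cone_le_scaleR: "cone_le K p q \<Longrightarrow> c \<ge> 0 \<Longrightarrow> cone_le K (c *\<^sub>R p) (c *\<^sub>R q)"
  unfolding cone_le_def by (metis convex_cone_scaleR[OF convex_cone_closure] scaleR_diff_right)

lemma cone_le_scaleR_left:
  "p \<in> closure K \<Longrightarrow> c \<le> d \<Longrightarrow> cone_le K (c *\<^sub>R p) (d *\<^sub>R p)"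
  unfolding cone_le_def by (metis convex_cone_scaleR[OF convex_cone_closure] diff_ge_0_iff_ge scaleR_diff_left)

lemma cone_le_linear_image:
  assumes "linear h" "h ` K \<subseteq> K" and "cone_le K p q"
  shows "cone_le K (h p) (h q)"
proof -
  have "h ` closure K \<subseteq> closure K"
    using assms(1,2) closure_subset
    by (intro image_closure_subset) (auto simp: linear_continuous_on linear_conv_bounded_linear)
  then show ?thesis using assms(3) linear_diff[OF assms(1)] unfolding cone_le_def by auto
qed

lemma cone_le_sum:
  "finite S \<Longrightarrow> (\<And>i. i \<in> S \<Longrightarrow> cone_le K (p i) (q i)) \<Longrightarrow> cone_le K (sum p S) (sum q S)"
  unfolding cone_le_def by (simp add: sum_mem_closure flip: sum_subtractf)

lemma cone_le_convex_combination:
  assumes "finite S" and "\<And>x. x \<in> S \<Longrightarrow> u x \<ge> 0" and "\<And>x. x \<in> S \<Longrightarrow> h x \<in> closure K"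
    and "\<And>x. x \<in> S \<Longrightarrow> c x \<le> C" and "\<And>x. x \<in> S \<Longrightarrow> cone_le K (p x) (c x *\<^sub>R h x)"
  shows "cone_le K (\<Sum>x\<in>S. u x *\<^sub>R p x) (C *\<^sub>R (\<Sum>x\<in>S. u x *\<^sub>R h x))"
proof -
  have "cone_le K (u x *\<^sub>R p x) (u x *\<^sub>R (C *\<^sub>R h x))" if x: "x \<in> S" for x
  proof -
    have "cone_le K (p x) (C *\<^sub>R h x)"
      using assms(3-5) x by (blast intro: cone_le_trans cone_le_scaleR_left)
    then show ?thesis using assms(2)[OF x] by (rule cone_le_scaleR)
  qed
  then have "cone_le K (\<Sum>x\<in>S. u x *\<^sub>R p x) (\<Sum>x\<in>S. u x *\<^sub>R (C *\<^sub>R h x))"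
    by (rule cone_le_sum[OF assms(1)])
  then show ?thesis by (simp add: scaleR_sum_right mult.commute)
qed

lemma exists_scaleR_cone_le:
  assumes "x \<in> K"
  obtains t where "t > 0" "cone_le K (t *\<^sub>R y) x"
proof -
  obtain e where e: "e > 0" "ball x e \<subseteq> K" using open_cone assms open_contains_ball by blast
  define t where "t = e / (2 * (norm y + 1))"
  have y: "norm y + 1 > 0" using norm_ge_zero[of y] by linarith
  have t: "t > 0" using e y by (simp add: t_def)
  have "norm (t *\<^sub>R y) \<le> t * (norm y + 1)" using t by simp
  also have "\<dots> = e / 2" using y by (simp add: t_def field_simps)
  also have "\<dots> < e" using e by simp
  finally have "x - t *\<^sub>R y \<in> closure K" using e closure_subset by (force simp: dist_norm)
  with t that show ?thesis unfolding cone_le_def by blast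
qed

end

lemma chart_image_eq_slice:
  assumes "is_cone K" and "\<And>v. v \<in> K \<Longrightarrow> w \<bullet> v > 0"
  shows "chart_image w K = {p \<in> K. w \<bullet> p = 1}"
proof
  show "chart_image w K \<subseteq> {p \<in> K. w \<bullet> p = 1}"
    unfolding chart_image_def
  proof (rule image_subsetI)
    fix v assume v: "v \<in> K"
    then have "w \<bullet> v > 0" by (rule assms(2))
    moreover have "(1 / (w \<bullet> v)) *\<^sub>R v \<in> K"
      using assms(1) v calculation unfolding is_cone_def by simp
    ultimately show "(1 / (w \<bullet> v)) *\<^sub>R v \<in> {p \<in> K. w \<bullet> p = 1}" by simp
  qed
  show "{p \<in> K. w \<bullet> p = 1} \<subseteq> chart_image w K"
  proof clarify
    fix p assume "p \<in> K" "w \<bullet> p = 1"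
    then show "p \<in> chart_image w K"
      unfolding chart_image_def by (intro image_eqI[of p _ p]) simp_all
  qed
qed

lemma convex_of_convex_chart_image:
  assumes cone: "is_cone K" and pos: "\<And>v. v \<in> K \<Longrightarrow> w \<bullet> v > 0"
    and convex: "convex (chart_image w K)"
  shows "convex K"
proof (rule convexI)
  fix u v :: 'a and s t :: real
  assume u: "u \<in> K" and v: "v \<in> K" and st: "0 \<le> s" "0 \<le> t" "s + t = 1"
  have scale: "c *\<^sub>R x \<in> K" if "x \<in> K" "c > 0" for x c
    using cone that unfolding is_cone_def by auto
  define cu cv where "cu = w \<bullet> u" and "cv = w \<bullet> v"
  have pos_uv: "cu > 0" "cv > 0" using pos u v by (auto simp: cu_def cv_def)
  define c where "c = s * cu + t * cv"
  have c: "c > 0"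
    using st pos_uv unfolding c_def by (cases "s = 0") (auto intro: add_pos_nonneg)
  have "(1/cu) *\<^sub>R u \<in> chart_image w K" "(1/cv) *\<^sub>R v \<in> chart_image w K"
    using pos_uv scale u v by (auto simp: chart_image_eq_slice[OF cone pos] cu_def cv_def)
  then have "(s*cu/c) *\<^sub>R ((1/cu) *\<^sub>R u) + (t*cv/c) *\<^sub>R ((1/cv) *\<^sub>R v) \<in> chart_image w K"
    using st pos_uv c by (intro convexD[OF convex]) (auto simp: c_def add_divide_distrib[symmetric])
  then have "c *\<^sub>R ((s*cu/c) *\<^sub>R ((1/cu) *\<^sub>R u) + (t*cv/c) *\<^sub>R ((1/cv) *\<^sub>R v)) \<in> K"
    using c scale by (auto simp: chart_image_eq_slice[OF cone pos])
  then show "s *\<^sub>R u + t *\<^sub>R v \<in> K"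
    using c pos_uv by (simp add: scaleR_add_right)
qed

locale chart_domain = open_convex_cone K for K :: "'a::euclidean_space set" +
  fixes w :: 'a
  assumes bounded_chart: "bounded_chart w K"
begin

lemma inner_pos: "v \<in> K \<Longrightarrow> w \<bullet> v > 0"
  using bounded_chart unfolding bounded_chart_def by auto

lemma chart_image_eq: "chart_image w K = {p \<in> K. w \<bullet> p = 1}"
  using is_cone inner_pos by (rule chart_image_eq_slice)

lemma inner_nonneg_closure: "p \<in> closure K \<Longrightarrow> w \<bullet> p \<ge> 0"
proof -
  have "closure K \<subseteq> {x. 0 \<le> w \<bullet> x}"
    using inner_pos by (intro closure_minimal) (auto intro: less_imp_le simp: closed_halfspace_ge)
  then show "p \<in> closure K \<Longrightarrow> w \<bullet> p \<ge> 0" by auto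
qed

text \<open>The closure of K contains no line: this is where the properness of the domain enters.\<close>
lemma cone_le_scaleR_cancel:
  assumes "v \<in> K" and "cone_le K (a *\<^sub>R v) (b *\<^sub>R v)"
  shows "a \<le> b"
proof -
  have "(b - a) *\<^sub>R v \<in> closure K"
    using assms(2) unfolding cone_le_def by (simp add: scaleR_diff_left)
  then have "0 \<le> w \<bullet> ((b - a) *\<^sub>R v)" by (rule inner_nonneg_closure)
  then show ?thesis using inner_pos[OF assms(1)] by (simp add: zero_le_mult_iff)
qed

lemma cone_le_mutual_product_ge_1:
  assumes "v \<in> K" and "B \<ge> 0" and "cone_le K u (A *\<^sub>R v)" and "cone_le K v (B *\<^sub>R u)"
  shows "A * B \<ge> 1"
proof -
  have "cone_le K (B *\<^sub>R u) ((A * B) *\<^sub>R v)"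
    using cone_le_scaleR[OF assms(3,2)] by (simp add: mult.commute)
  with assms(4) have "cone_le K v ((A * B) *\<^sub>R v)" by (rule cone_le_trans)
  then show ?thesis using cone_le_scaleR_cancel[OF assms(1), of 1] by simp
qed

text \<open>If y \<le> s x then also y \<le> \<gamma> g y \<le> \<gamma> s g x \<le> \<beta> \<gamma> s x; for \<beta> \<gamma> < 1 iterating this
would put y below arbitrarily small multiples of x.\<close>
lemma cone_le_linear_cross:
  assumes g: "linear g" "g ` K \<subseteq> K" and x: "x \<in> K" and y: "y \<in> K"
    and pos: "\<beta> > 0" "\<gamma> > 0"
    and gx: "cone_le K (g x) (\<beta> *\<^sub>R x)" and gy: "cone_le K y (\<gamma> *\<^sub>R g y)"
  shows "\<beta> * \<gamma> \<ge> 1"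
proof (rule ccontr)
  assume "\<not> \<beta> * \<gamma> \<ge> 1"
  have step: "cone_le K y ((\<beta> * \<gamma> * s) *\<^sub>R x)" if "cone_le K y (s *\<^sub>R x)" "s \<ge> 0" for s
  proof -
    have "cone_le K (g y) (s *\<^sub>R g x)"
      using cone_le_linear_image[OF g that(1)] linear_scale[OF g(1)] by simp
    also have "cone_le K (s *\<^sub>R g x) ((s * \<beta>) *\<^sub>R x)"
      using cone_le_scaleR[OF gx that(2)] by simp
    finally have "cone_le K (\<gamma> *\<^sub>R g y) (\<gamma> *\<^sub>R ((s * \<beta>) *\<^sub>R x))"
      using pos(2) by (intro cone_le_scaleR) auto
    then have "cone_le K (\<gamma> *\<^sub>R g y) ((\<beta> * \<gamma> * s) *\<^sub>R x)" by (simp add: ac_simps)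
    with gy show ?thesis by (rule cone_le_trans)
  qed
  obtain t where t: "t > 0" "cone_le K (t *\<^sub>R y) x" using exists_scaleR_cone_le[OF x] .
  have "cone_le K y ((1 / t) *\<^sub>R x)"
    using cone_le_scaleR[OF t(2), of "1 / t"] t(1) by simp
  then have iter: "cone_le K y (((\<beta> * \<gamma>) ^ n / t) *\<^sub>R x)" for n
  proof (induction n)
    case (Suc n)
    then have "cone_le K y ((\<beta> * \<gamma> * ((\<beta> * \<gamma>) ^ n / t)) *\<^sub>R x)"
      using pos t(1) by (intro step) auto
    then show ?case by simp
  qed simp
  obtain t' where t': "t' > 0" "cone_le K (t' *\<^sub>R x) y" using exists_scaleR_cone_le[OF y] .
  obtain n where "(\<beta> * \<gamma>) ^ n < t * t'"
    using real_arch_pow_inv[of "t * t'" "\<beta> * \<gamma>"] t t' \<open>\<not> \<beta> * \<gamma> \<ge> 1\<close> by auto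
  moreover have "t' \<le> (\<beta> * \<gamma>) ^ n / t"
    using cone_le_trans[OF t'(2) iter] x by (rule cone_le_scaleR_cancel[rotated])
  ultimately show False using t by (simp add: field_simps)
qed

definition exit_param :: "'a \<Rightarrow> 'a \<Rightarrow> real" where
  "exit_param p f = Sup {s. s \<ge> 0 \<and> p + s *\<^sub>R f \<in> chart_image w K}"

lemma bdd_above_exit_set:
  assumes "f \<noteq> 0"
  shows "bdd_above {s. s \<ge> 0 \<and> p + s *\<^sub>R f \<in> chart_image w K}"
proof -
  obtain b where b: "\<forall>x\<in>chart_image w K. norm x \<le> b"
    using bounded_chart unfolding bounded_chart_def bounded_iff by auto
  have "s \<le> (b + norm p) / norm f" if "s \<ge> 0" "p + s *\<^sub>R f \<in> chart_image w K" for s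
  proof -
    have "s * norm f = norm (s *\<^sub>R f)" using that by simp
    also have "\<dots> \<le> norm (p + s *\<^sub>R f) + norm p" using norm_triangle_ineq4[of "p + s *\<^sub>R f" p] by simp
    also have "\<dots> \<le> b + norm p" using b that by simp
    finally show ?thesis using assms by (simp add: field_simps)
  qed
  then show ?thesis unfolding bdd_above_def by blast
qed

lemma exit_param_pos:
  assumes p: "p \<in> chart_image w K" and f: "f \<noteq> 0" "w \<bullet> f = 0"
  shows "exit_param p f > 0"
proof -
  obtain e where e: "e > 0" "ball p e \<subseteq> K"
    using open_cone p open_contains_ball chart_image_eq by blast
  define s where "s = e / (2 * norm f)"
  have s: "s > 0" using e f by (simp add: s_def)
  have "p + s *\<^sub>R f \<in> K" using e f s by (intro subsetD[OF e(2)]) (simp add: s_def dist_norm)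
  moreover have "w \<bullet> (p + s *\<^sub>R f) = 1" using p f chart_image_eq by (simp add: inner_add_right)
  ultimately have "s \<le> exit_param p f"
    unfolding exit_param_def using s chart_image_eq by (intro cSup_upper bdd_above_exit_set f) auto
  with s show ?thesis by linarith
qed

lemma exit_point_mem_closure:
  assumes p: "p \<in> chart_image w K" and f: "f \<noteq> 0"
  shows "p + exit_param p f *\<^sub>R f \<in> closure K"
  unfolding closure_approachable
proof (intro allI impI)
  define S where "S = {s. s \<ge> 0 \<and> p + s *\<^sub>R f \<in> chart_image w K}"
  fix e :: real assume e: "e > 0"
  have "0 \<in> S" using p by (simp add: S_def)
  moreover have "Sup S - e / norm f < Sup S" using e f by simp
  ultimately obtain s where s: "s \<in> S" "Sup S - e / norm f < s"
    using less_cSupE by blast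
  have "s \<le> Sup S" using cSup_upper[OF s(1)] bdd_above_exit_set[OF f] by (simp add: S_def)
  have "p + s *\<^sub>R f - (p + Sup S *\<^sub>R f) = (s - Sup S) *\<^sub>R f" by (simp add: algebra_simps)
  then have "dist (p + s *\<^sub>R f) (p + Sup S *\<^sub>R f) = (Sup S - s) * norm f"
    using \<open>s \<le> Sup S\<close> by (simp add: dist_norm)
  also have "\<dots> < e" using s(2) f by (simp add: field_simps)
  finally have "dist (p + s *\<^sub>R f) (p + Sup S *\<^sub>R f) < e" .
  moreover have "p + s *\<^sub>R f \<in> K" using s(1) chart_image_eq by (simp add: S_def)
  ultimately show "\<exists>y\<in>K. dist y (p + exit_param p f *\<^sub>R f) < e"
    unfolding exit_param_def S_def by blast
qed

lemma exit_param_ge_inverse: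
  assumes f: "f \<noteq> 0"
    and inside: "\<And>s. 0 \<le> s \<Longrightarrow> s * c < 1 \<Longrightarrow> p + s *\<^sub>R f \<in> chart_image w K"
  shows "c > 0" and "1 / c \<le> exit_param p f"
proof -
  define S where "S = {s. s \<ge> 0 \<and> p + s *\<^sub>R f \<in> chart_image w K}"
  have bdd: "bdd_above S" using bdd_above_exit_set[OF f] by (simp add: S_def)
  then obtain b where b: "\<And>s. s \<in> S \<Longrightarrow> s \<le> b" unfolding bdd_above_def by auto
  show c: "c > 0"
  proof (rule ccontr)
    assume "\<not> c > 0"
    then have "max b 0 + 1 \<in> S"
      using inside[of "max b 0 + 1"] mult_nonneg_nonpos[of "max b 0 + 1" c] by (simp add: S_def)
    then have "max b 0 + 1 \<le> b" by (rule b)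
    then show False by (cases "b \<ge> 0") (auto simp: max_def)
  qed
  show "1 / c \<le> exit_param p f"
    unfolding exit_param_def S_def[symmetric]
  proof (rule dense_le)
    fix s assume s: "s < 1 / c"
    show "s \<le> Sup S"
    proof (cases "s \<ge> 0")
      case True
      then have "s \<in> S" using inside[of s] s c by (simp add: S_def field_simps)
      then show ?thesis using bdd by (rule cSup_upper)
    next
      case False
      have "0 \<in> S" using inside[of 0] by (simp add: S_def)
      then have "0 \<le> Sup S" using bdd by (rule cSup_upper)
      with False show ?thesis by linarith
    qed
  qed
qed

definition chart_point :: "'a \<Rightarrow> 'a" where
  "chart_point v = (1 / (w \<bullet> v)) *\<^sub>R v"

lemma chart_point_mem: "v \<in> K \<Longrightarrow> chart_point v \<in> chart_image w K"
  by (simp add: chart_image_def chart_point_def)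

lemma inner_chart_point: "v \<in> K \<Longrightarrow> w \<bullet> chart_point v = 1"
  using inner_pos[of v] by (simp add: chart_point_def)

lemma scaleR_chart_point: "v \<in> K \<Longrightarrow> (w \<bullet> v) *\<^sub>R chart_point v = v"
  using inner_pos[of v] by (simp add: chart_point_def)

lemma scaleR_eq_of_chart_point_eq:
  assumes "u \<in> K" "v \<in> K" "chart_point u = chart_point v"
  shows "((w \<bullet> u) / (w \<bullet> v)) *\<^sub>R v = u"
proof -
  have "((w \<bullet> u) / (w \<bullet> v)) *\<^sub>R v = ((w \<bullet> u) / (w \<bullet> v) * (w \<bullet> v)) *\<^sub>R chart_point v"
    using scaleR_chart_point[OF assms(2)] by (metis scaleR_scaleR)
  also have "\<dots> = (w \<bullet> u) *\<^sub>R chart_point u"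
    using assms(3) inner_pos[OF assms(2)] by simp
  finally show ?thesis using scaleR_chart_point[OF assms(1)] by simp
qed

text \<open>The boundary points a, b of the chord through the chart points x', y' of u and v are
a = x' + s (x' - y') and b = y' + t (y' - x') with s = exit_time u v and t = exit_time v u.\<close>
definition exit_time :: "'a \<Rightarrow> 'a \<Rightarrow> real" where
  "exit_time u v = exit_param (chart_point u) (chart_point u - chart_point v)"

lemma exit_time_pos:
  assumes "u \<in> K" "v \<in> K" "chart_point u \<noteq> chart_point v"
  shows "exit_time u v > 0"
  unfolding exit_time_def
  using assms chart_point_mem inner_chart_point by (intro exit_param_pos) (auto simp: inner_diff_right)

lemma hilbert_chart_same_chart_point:
  "chart_point u = chart_point v \<Longrightarrow> hilbert_chart w K u v = 0"
  unfolding hilbert_chart_def Let_def chart_point_def by simp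

lemma hilbert_chart_eq_exit_time:
  assumes u: "u \<in> K" and v: "v \<in> K" and ne: "chart_point u \<noteq> chart_point v"
  shows "hilbert_chart w K u v
    = ln ((1 + exit_time u v) * (1 + exit_time v u) / (exit_time u v * exit_time v u)) / 2"
proof -
  define x y s t where "x = chart_point u" and "y = chart_point v"
    and "s = exit_time u v" and "t = exit_time v u"
  have st: "s > 0" "t > 0" using exit_time_pos u v ne by (auto simp: s_def t_def)
  have e: "norm (x - y) > 0" using ne by (simp add: x_def y_def)
  have "x - (y + t *\<^sub>R (y - x)) = (1 + t) *\<^sub>R (x - y)"
    and "y - (x + s *\<^sub>R (x - y)) = - ((1 + s) *\<^sub>R (x - y))"
    and "x - (x + s *\<^sub>R (x - y)) = - (s *\<^sub>R (x - y))"
    and "y - (y + t *\<^sub>R (y - x)) = t *\<^sub>R (x - y)"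
    by (simp_all add: algebra_simps)
  then have "hilbert_chart w K u v
      = ln ((1 + t) * norm (x - y) * ((1 + s) * norm (x - y)) / (s * norm (x - y) * (t * norm (x - y)))) / 2"
    using ne st unfolding hilbert_chart_def Let_def exit_time_def exit_param_def x_def y_def s_def t_def
    by (simp only: chart_point_def[symmetric] norm_minus_cancel norm_scaleR) (simp add: chart_point_def)
  also have "\<dots> = ln ((1 + s) * (1 + t) * (norm (x - y) * norm (x - y))
      / ((s * t) * (norm (x - y) * norm (x - y)))) / 2"
    by (simp add: ac_simps)
  also have "\<dots> = ln ((1 + s) * (1 + t) / (s * t)) / 2"
    using e by (subst mult_divide_mult_cancel_right) auto
  finally show ?thesis by (simp add: s_def t_def)
qed

lemma exit_time_bound:
  assumes u: "u \<in> K" and v: "v \<in> K" and ne: "chart_point u \<noteq> chart_point v"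
    and le: "cone_le K v (B *\<^sub>R u)"
  shows "(1 + exit_time u v) / exit_time u v \<le> B * (w \<bullet> u) / (w \<bullet> v)"
proof -
  define x y b where "x = chart_point u" and "y = chart_point v" and "b = B * (w \<bullet> u) / (w \<bullet> v)"
  have xy: "x \<in> K" "y \<in> K" "w \<bullet> x = 1" "w \<bullet> y = 1"
    using chart_point_mem inner_chart_point u v chart_image_eq by (auto simp: x_def y_def)
  have "(1 / (w \<bullet> v)) *\<^sub>R (B *\<^sub>R u - v) = b *\<^sub>R x - y"
    using inner_pos[OF u] inner_pos[OF v] by (simp add: b_def x_def y_def chart_point_def algebra_simps)
  moreover have "(1 / (w \<bullet> v)) *\<^sub>R (B *\<^sub>R u - v) \<in> closure K"
    using le inner_pos[OF v] unfolding cone_le_def by (intro convex_cone_scaleR[OF convex_cone_closure]) auto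
  ultimately have below: "b *\<^sub>R x - y \<in> closure K" by simp
  have inside: "x + s *\<^sub>R (x - y) \<in> chart_image w K" if s: "0 \<le> s" "s * (b - 1) < 1" for s
  proof -
    have "(1 - s * (b - 1)) *\<^sub>R x + s *\<^sub>R (b *\<^sub>R x - y) \<in> K"
      using s xy below by (intro add_closure_mem scaleR_mem convex_cone_scaleR[OF convex_cone_closure]) auto
    moreover have "(1 - s * (b - 1)) *\<^sub>R x + s *\<^sub>R (b *\<^sub>R x - y) = x + s *\<^sub>R (x - y)"
      by (simp add: algebra_simps)
    ultimately show ?thesis using xy by (simp add: chart_image_eq inner_add_right inner_diff_right)
  qed
  have "x - y \<noteq> 0" using ne by (simp add: x_def y_def)
  note exit = exit_param_ge_inverse[of "x - y" "b - 1" x, OF this inside]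
  have s: "exit_time u v > 0" using exit_time_pos u v ne .
  have "1 / exit_time u v \<le> b - 1"
    using exit s by (simp add: exit_time_def x_def y_def field_simps)
  then show ?thesis using s by (simp add: b_def[symmetric] add_divide_distrib)
qed

lemma cone_le_exit_time:
  assumes u: "u \<in> K" and v: "v \<in> K" and ne: "chart_point u \<noteq> chart_point v"
  shows "cone_le K v (((1 + exit_time u v) / exit_time u v * (w \<bullet> v) / (w \<bullet> u)) *\<^sub>R u)"
proof -
  define x y s where "x = chart_point u" and "y = chart_point v" and "s = exit_time u v"
  have s: "s > 0" using exit_time_pos[OF u v ne] by (simp add: s_def)
  have "x + s *\<^sub>R (x - y) \<in> closure K"
    using exit_point_mem_closure chart_point_mem[OF u] ne
    by (simp add: x_def y_def s_def exit_time_def)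
  then have "((w \<bullet> v) / s) *\<^sub>R (x + s *\<^sub>R (x - y)) \<in> closure K"
    using s inner_pos[OF v] by (intro convex_cone_scaleR[OF convex_cone_closure]) auto
  moreover have "((w \<bullet> v) / s) *\<^sub>R (x + s *\<^sub>R (x - y))
      = ((w \<bullet> v) / s + w \<bullet> v) *\<^sub>R x - (w \<bullet> v) *\<^sub>R y"
    using s by (simp add: algebra_simps)
  also have "(w \<bullet> v) *\<^sub>R y = v" using scaleR_chart_point[OF v] by (simp add: y_def)
  also have "(w \<bullet> v) / s + w \<bullet> v = (1 + s) / s * (w \<bullet> v) / (w \<bullet> u) * (w \<bullet> u)"
    using s inner_pos[OF u] by (simp add: field_simps)
  also have "(\<dots>) *\<^sub>R x = ((1 + s) / s * (w \<bullet> v) / (w \<bullet> u)) *\<^sub>R u"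
    using scaleR_chart_point[OF u] by (metis scaleR_scaleR x_def)
  ultimately show ?thesis by (simp add: cone_le_def s_def)
qed

lemma hilbert_chart_le:
  assumes u: "u \<in> K" and v: "v \<in> K" and "A \<ge> 0" "B \<ge> 0"
    and uv: "cone_le K u (A *\<^sub>R v)" and vu: "cone_le K v (B *\<^sub>R u)"
  shows "hilbert_chart w K u v \<le> ln (A * B) / 2"
proof (cases "chart_point u = chart_point v")
  case True
  have "A * B \<ge> 1" using cone_le_mutual_product_ge_1[OF v \<open>B \<ge> 0\<close> uv vu] .
  then show ?thesis using hilbert_chart_same_chart_point[OF True] by simp
next
  case False
  define s t where "s = exit_time u v" and "t = exit_time v u"
  have st: "s > 0" "t > 0" using exit_time_pos u v False by (auto simp: s_def t_def)
  have "(1 + s) / s \<le> B * (w \<bullet> u) / (w \<bullet> v)"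
    using exit_time_bound[OF u v False vu] by (simp add: s_def)
  moreover have "(1 + t) / t \<le> A * (w \<bullet> v) / (w \<bullet> u)"
    using exit_time_bound[OF v u _ uv] False by (simp add: t_def)
  ultimately have "(1 + s) / s * ((1 + t) / t) \<le> B * (w \<bullet> u) / (w \<bullet> v) * (A * (w \<bullet> v) / (w \<bullet> u))"
    using st \<open>B \<ge> 0\<close> inner_pos[OF u] inner_pos[OF v] by (intro mult_mono) auto
  also have "\<dots> = A * B" using inner_pos[OF u] inner_pos[OF v] by (simp add: field_simps)
  finally have "(1 + s) * (1 + t) / (s * t) \<le> A * B" by simp
  moreover have "(1 + s) * (1 + t) / (s * t) > 0" using st by simp
  ultimately show ?thesis
    using hilbert_chart_eq_exit_time[OF u v False] by (simp add: s_def t_def)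
qed

lemma hilbert_chart_attained:
  assumes u: "u \<in> K" and v: "v \<in> K"
  obtains A B where "A > 0" "B > 0" "cone_le K u (A *\<^sub>R v)" "cone_le K v (B *\<^sub>R u)"
    "hilbert_chart w K u v = ln (A * B) / 2"
proof (cases "chart_point u = chart_point v")
  case True
  have "((w \<bullet> u) / (w \<bullet> v)) *\<^sub>R v = u" "((w \<bullet> v) / (w \<bullet> u)) *\<^sub>R u = v"
    using scaleR_eq_of_chart_point_eq u v True by metis+
  then show ?thesis
    using that[of "(w \<bullet> u) / (w \<bullet> v)" "(w \<bullet> v) / (w \<bullet> u)"] inner_pos[OF u] inner_pos[OF v]
      hilbert_chart_same_chart_point[OF True] by (simp add: cone_le_refl)
next
  case False
  define s t where "s = exit_time u v" and "t = exit_time v u"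
  have st: "s > 0" "t > 0" using exit_time_pos u v False by (auto simp: s_def t_def)
  have product: "(1 + t) / t * (w \<bullet> u) / (w \<bullet> v) * ((1 + s) / s * (w \<bullet> v) / (w \<bullet> u))
      = (1 + s) * (1 + t) / (s * t)"
    using inner_pos[OF u] inner_pos[OF v] st by (simp add: field_simps)
  show ?thesis
  proof (rule that)
    show "cone_le K u (((1 + t) / t * (w \<bullet> u) / (w \<bullet> v)) *\<^sub>R v)"
      using cone_le_exit_time[OF v u] False by (simp add: t_def)
    show "cone_le K v (((1 + s) / s * (w \<bullet> v) / (w \<bullet> u)) *\<^sub>R u)"
      using cone_le_exit_time[OF u v False] by (simp add: s_def)
    show "hilbert_chart w K u v
        = ln ((1 + t) / t * (w \<bullet> u) / (w \<bullet> v) * ((1 + s) / s * (w \<bullet> v) / (w \<bullet> u))) / 2"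
      unfolding product using hilbert_chart_eq_exit_time[OF u v False] by (simp add: s_def t_def)
  qed (use st inner_pos[OF u] inner_pos[OF v] in auto)
qed

lemma hilbert_chart_DIM_1:
  assumes "DIM('a) = 1" and u: "u \<in> K" and v: "v \<in> K"
  shows "hilbert_chart w K u v = 0"
proof -
  obtain b where b: "Basis = {b::'a}" using card_1_singletonE[OF assms(1)] by blast
  have rep: "x = (x \<bullet> b) *\<^sub>R b" for x :: 'a
    using euclidean_representation[of x] by (simp add: b)
  have "chart_point x = (1 / (w \<bullet> b)) *\<^sub>R b" if "x \<in> K" for x
  proof -
    have "w \<bullet> x = w \<bullet> ((x \<bullet> b) *\<^sub>R b)" using rep[of x] by (rule arg_cong)
    then have wx: "w \<bullet> x = (x \<bullet> b) * (w \<bullet> b)" by (simp only: inner_scaleR_right)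
    then have "x \<bullet> b \<noteq> 0" using inner_pos[OF that] by auto
    have "chart_point x = (1 / ((x \<bullet> b) * (w \<bullet> b))) *\<^sub>R ((x \<bullet> b) *\<^sub>R b)"
      unfolding chart_point_def wx using rep[of x] by (rule arg_cong)
    also have "\<dots> = (1 / (w \<bullet> b)) *\<^sub>R b" using \<open>x \<bullet> b \<noteq> 0\<close> by simp
    finally show ?thesis .
  qed
  then show ?thesis using u v hilbert_chart_same_chart_point by simp
qed

lemma ln_cross_product_le_hilbert_chart_add:
  assumes g: "linear g" "g ` K \<subseteq> K" and p: "p \<in> K" and q: "q \<in> K"
    and pos: "A\<^sub>p > 0" "B\<^sub>p > 0" "A\<^sub>q > 0" "B\<^sub>q > 0"
    and le: "cone_le K (g p) (B\<^sub>p *\<^sub>R p)" "cone_le K q (A\<^sub>q *\<^sub>R g q)"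
    and Hp: "hilbert_chart w K p (g p) = ln (A\<^sub>p * B\<^sub>p) / 2"
    and Hq: "hilbert_chart w K q (g q) = ln (A\<^sub>q * B\<^sub>q) / 2"
  shows "ln (A\<^sub>p * B\<^sub>q) / 2 \<le> hilbert_chart w K p (g p) + hilbert_chart w K q (g q)"
proof -
  have "B\<^sub>p * A\<^sub>q \<ge> 1" using cone_le_linear_cross[OF g p q] pos le by auto
  then have "A\<^sub>p * B\<^sub>q \<le> (A\<^sub>p * B\<^sub>p) * (A\<^sub>q * B\<^sub>q)"
    using pos mult_left_mono[of 1 "B\<^sub>p * A\<^sub>q" "A\<^sub>p * B\<^sub>q"] by (simp add: ac_simps)
  then have "ln (A\<^sub>p * B\<^sub>q) \<le> ln ((A\<^sub>p * B\<^sub>p) * (A\<^sub>q * B\<^sub>q))" using pos by simp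
  also have "\<dots> = ln (A\<^sub>p * B\<^sub>p) + ln (A\<^sub>q * B\<^sub>q)" using pos by (simp add: ln_mult)
  finally show ?thesis unfolding Hp Hq by simp
qed

lemma hilbert_chart_convex_hull_le:
  assumes g: "linear g" "g ` K \<subseteq> K" and S: "S \<subseteq> K"
    and r: "\<And>x. x \<in> S \<Longrightarrow> hilbert_chart w K x (g x) \<le> r"
    and z: "z \<in> convex hull S"
  shows "hilbert_chart w K z (g z) \<le> 2 * r"
proof -
  obtain T u where T: "finite T" "T \<subseteq> S" "\<And>x. x \<in> T \<Longrightarrow> 0 \<le> u x" "sum u T = 1"
    and z_eq: "z = (\<Sum>x\<in>T. u x *\<^sub>R x)"
    using z unfolding convex_hull_explicit by auto
  have TK: "x \<in> K" "g x \<in> K" if "x \<in> T" for x using that T(2) S g(2) by auto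
  have "\<forall>x\<in>T. \<exists>A B. A > 0 \<and> B > 0 \<and> cone_le K x (A *\<^sub>R g x) \<and> cone_le K (g x) (B *\<^sub>R x)
      \<and> hilbert_chart w K x (g x) = ln (A * B) / 2"
  proof
    fix x assume "x \<in> T"
    from hilbert_chart_attained[OF TK[OF this]] show "\<exists>A B. A > 0 \<and> B > 0 \<and> cone_le K x (A *\<^sub>R g x)
        \<and> cone_le K (g x) (B *\<^sub>R x) \<and> hilbert_chart w K x (g x) = ln (A * B) / 2"
      by blast
  qed
  then obtain \<alpha> \<beta> where \<alpha>\<beta>: "\<And>x. x \<in> T \<Longrightarrow> \<alpha> x > 0 \<and> \<beta> x > 0 \<and> cone_le K x (\<alpha> x *\<^sub>R g x)
      \<and> cone_le K (g x) (\<beta> x *\<^sub>R x) \<and> hilbert_chart w K x (g x) = ln (\<alpha> x * \<beta> x) / 2"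
    by metis
  have "T \<noteq> {}" using T(4) by auto
  then have "Max (\<alpha> ` T) \<in> \<alpha> ` T" "Max (\<beta> ` T) \<in> \<beta> ` T" using T(1) by simp_all
  then obtain p q where p: "p \<in> T" "\<alpha> p = Max (\<alpha> ` T)" and q: "q \<in> T" "\<beta> q = Max (\<beta> ` T)"
    by (metis imageE)
  have max: "\<alpha> x \<le> \<alpha> p" "\<beta> x \<le> \<beta> q" if "x \<in> T" for x
    using that T(1) p(2) q(2) by simp_all
  have "g z = (\<Sum>x\<in>T. u x *\<^sub>R g x)"
    by (simp add: z_eq linear_sum[OF g(1)] linear_scale[OF g(1)])
  moreover have "cone_le K (\<Sum>x\<in>T. u x *\<^sub>R x) (\<alpha> p *\<^sub>R (\<Sum>x\<in>T. u x *\<^sub>R g x))"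
    using T(3) TK \<alpha>\<beta> max
    by (intro cone_le_convex_combination[OF T(1), where c = \<alpha>]) (auto intro: closure_subset[THEN subsetD])
  moreover have "cone_le K (\<Sum>x\<in>T. u x *\<^sub>R g x) (\<beta> q *\<^sub>R (\<Sum>x\<in>T. u x *\<^sub>R x))"
    using T(3) TK \<alpha>\<beta> max
    by (intro cone_le_convex_combination[OF T(1), where c = \<beta>]) (auto intro: closure_subset[THEN subsetD])
  ultimately have le: "cone_le K z (\<alpha> p *\<^sub>R g z)" "cone_le K (g z) (\<beta> q *\<^sub>R z)"
    by (simp_all add: z_eq)
  have "hilbert_chart w K z (g z) \<le> ln (\<alpha> p * \<beta> q) / 2"
  proof (rule hilbert_chart_le)
    show "z \<in> K" using z hull_minimal[of S K convex] S convex_set by blast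
    then show "g z \<in> K" using g(2) by blast
  qed (use le \<alpha>\<beta>[OF p(1)] \<alpha>\<beta>[OF q(1)] in auto)
  also have "\<dots> \<le> hilbert_chart w K p (g p) + hilbert_chart w K q (g q)"
    using \<alpha>\<beta>[OF p(1)] \<alpha>\<beta>[OF q(1)] TK[OF p(1)] TK[OF q(1)]
    by (intro ln_cross_product_le_hilbert_chart_add[OF g]) auto
  also have "\<dots> \<le> 2 * r" using r[of p] r[of q] p(1) q(1) T(2) by (simp add: subset_iff)
  finally show ?thesis .
qed

end

lemma properly_convex_domain_chart:
  assumes "properly_convex_domain K"
  obtains w where "chart_domain K w" and "hilbert_dist K = hilbert_chart w K"
proof -
  define w where "w = (SOME w. bounded_chart w K \<and> convex (chart_image w K))"
  have w: "bounded_chart w K" "convex (chart_image w K)"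
    using someI_ex[of "\<lambda>w. bounded_chart w K \<and> convex (chart_image w K)"] assms
    unfolding w_def properly_convex_domain_def by auto
  have "convex K"
    using assms w convex_of_convex_chart_image[of K w]
    unfolding properly_convex_domain_def bounded_chart_def by blast
  then have "chart_domain K w"
    using assms w unfolding properly_convex_domain_def by unfold_locales auto
  moreover have "hilbert_dist K = hilbert_chart w K"
    unfolding hilbert_dist_def w_def by (rule refl)
  ultimately show ?thesis by (rule that)
qed

theorem mainTheorem14:
  fixes K C :: "'a::euclidean_space set" and a :: "nat \<Rightarrow> 'a \<Rightarrow> 'a" and m :: nat
    and M :: "real \<Rightarrow> 'a set"
  assumes "properly_convex_domain K"
    and "is_cone C" and "C \<subseteq> K" and "C \<noteq> {}" and "convex C"
    and "closedin (top_of_set K) C"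
    and "\<And>j. j \<in> {1..m} \<Longrightarrow> proj_aut K (a j) \<and> a j ` C = C"
    and "M = (\<lambda>r. {x \<in> C. \<forall>j\<in>{1..m}. hilbert_dist K x (a j x) \<le> r})"
    and "r > 0"
  shows "convex hull (M r) \<subseteq> M (2 ^ (DIM('a) - 1) * r)"
proof
  obtain w where "chart_domain K w" and dist: "hilbert_dist K = hilbert_chart w K"
    using assms(1) by (rule properly_convex_domain_chart)
  interpret chart_domain K w by fact
  fix z assume z: "z \<in> convex hull (M r)"
  have MK: "M r \<subseteq> K" and MC: "M r \<subseteq> C" using assms(3,8) by auto
  then have "z \<in> C" using z hull_minimal[of "M r" C convex] assms(5) by blast
  moreover have "hilbert_chart w K z (a j z) \<le> 2 ^ (DIM('a) - 1) * r" if j: "j \<in> {1..m}" for j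
  proof -
    have aj: "linear (a j)" "a j ` K \<subseteq> K" using assms(7)[OF j] unfolding proj_aut_def by auto
    have bound: "hilbert_chart w K x (a j x) \<le> r" if "x \<in> M r" for x
      using that j assms(8) dist by auto
    show ?thesis
    proof (cases "DIM('a) = 1")
      case True
      have "z \<in> K" using \<open>z \<in> C\<close> assms(3) by auto
      then show ?thesis using hilbert_chart_DIM_1[OF True] aj assms(9) by auto
    next
      case False
      then have "(2::real) ^ 1 \<le> 2 ^ (DIM('a) - 1)"
        using DIM_positive[where 'a='a] by (intro power_increasing) linarith+
      then have "2 * r \<le> 2 ^ (DIM('a) - 1) * r" using assms(9) by (intro mult_right_mono) auto
      with hilbert_chart_convex_hull_le[OF aj MK bound z] show ?thesis by linarith
    qed
  qed
  ultimately show "z \<in> M (2 ^ (DIM('a) - 1) * r)" using assms(8) dist by simp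
qed

end
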